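(* Let $q$ be a prime power and $d\ge 2q-1$ an integer. Let $R_d$ be the set of homogeneous polynomials of degree $d$ in $\mathbb{F}_q[x,y,z]$ (including $0$), and for $f\in R_d$ let $\#C_f(\mathbb{F}_q)$ denote the number of points of $\mathbb{P}^2(\mathbb{F}_q)$ at which $f$ vanishes. Let $B_1,\dots,B_{q^2+q+1}$ be independent identically distributed Bernoulli random variables taking the value $1$ with probability $1/q$. Then for every integer $n$, $$\frac{\#\{f\in R_d:\#C_f(\mathbb{F}_q)=n\}}{\#R_d}=\mathrm{Prob}(B_1+\dots+B_{q^2+q+1}=n).$$ *)

theory Defs
  imports "HOL-Probability.Probability"
begin

definition deg_monos :: "nat \<Rightarrow> (nat \<times> nat \<times> nat) set" where
  "deg_monos d = {(i, j, k). i + j + k = d}"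

text \<open>A polynomial in F[x,y,z] is represented by its coefficient function on exponent
  triples.\<close>
definition hom_polys :: "nat \<Rightarrow> ((nat \<times> nat \<times> nat) \<Rightarrow> 'a::{field,finite}) set" where
  "hom_polys d = {f. \<forall>m. f m \<noteq> 0 \<longrightarrow> m \<in> deg_monos d}"

definition poly_eval :: "nat \<Rightarrow> ((nat \<times> nat \<times> nat) \<Rightarrow> 'a::{field,finite}) \<Rightarrow> 'a \<times> 'a \<times> 'a \<Rightarrow> 'a" where
  "poly_eval d f = (\<lambda>(x, y, z). \<Sum>(i, j, k)\<in>deg_monos d. f (i, j, k) * x ^ i * y ^ j * z ^ k)"

definition proj_points :: "('a::{field,finite} \<times> 'a \<times> 'a) set set" where
  "proj_points = {{(c * x, c * y, c * z) | c. c \<noteq> 0} | x y z. (x, y, z) \<noteq> (0, 0, 0)}"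

definition num_points :: "nat \<Rightarrow> ((nat \<times> nat \<times> nat) \<Rightarrow> 'a::{field,finite}) \<Rightarrow> nat" where
  "num_points d f = card {P \<in> proj_points. \<forall>v\<in>P. poly_eval d f v = 0}"

end

theory Submission
  imports Defs
begin

text \<open>Let q be the size of the field and e = d - 2(q - 1), so that e \<ge> 1. Every point of the
  projective plane has exactly one representative whose first nonzero coordinate is 1, and since
  t^(q-1) is 1 for t \<noteq> 0 and 0 for t = 0, the form
  x^e (x^(q-1) - (y - b x)^(q-1)) (x^(q-1) - (z - c x)^(q-1)) of degree d takes the value 1 at the
  representative (1, b, c) and 0 at all others (similarly for the points with x = 0). Hence evaluation
  at the q^2 + q + 1 representatives maps the forms of degree d onto all functions on them. Being
  linear, it has fibres all of the size of its kernel, so the values of a uniformly random form at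
  the points are independent and uniform on the field; each vanishes with probability 1/q, and the
  number of zeros is binomial with parameters q^2 + q + 1 and 1/q.\<close>

lemma finite_field_power_card_minus_one:
  fixes x :: "'a::{field,finite}"
  assumes "x \<noteq> 0"
  shows "x ^ (CARD('a) - 1) = 1"
proof -
  let ?U = "UNIV - {0::'a}"
  have "bij_betw (\<lambda>y. x * y) ?U ?U"
    using assms by (intro bij_betwI[where g = "\<lambda>y. y / x"]) auto
  then have "prod id ?U = prod (\<lambda>y. x * y) ?U"
    using prod.reindex_bij_betw[of "\<lambda>y. x * y" ?U ?U id] by simp
  also have "\<dots> = x ^ card ?U * prod id ?U"
    by (simp add: prod.distrib)
  finally have "x ^ card ?U = 1"
    by simp
  then show ?thesis
    by (simp add: card_Diff_singleton)
qed

lemma card_field_ge_two: "CARD('a::{field,finite}) \<ge> 2"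
  using card_mono[of UNIV "{0::'a, 1}"] by simp

lemma finite_field_power_card_minus_one_if:
  fixes x :: "'a::{field,finite}"
  shows "x ^ (CARD('a) - 1) = (if x = 0 then 0 else 1)"
  using finite_field_power_card_minus_one[of x] card_field_ge_two[where 'a = 'a] by simp

lemma finite_deg_monos: "finite (deg_monos d)"
  by (rule finite_subset[of _ "{..d} \<times> {..d} \<times> {..d}"]) (auto simp: deg_monos_def)

lemma hom_polys_iff: "f \<in> hom_polys d \<longleftrightarrow> (\<forall>m. m \<notin> deg_monos d \<longrightarrow> f m = 0)"
  by (auto simp: hom_polys_def)

lemma finite_hom_polys: "finite (hom_polys d :: ((nat \<times> nat \<times> nat) \<Rightarrow> 'a::{field,finite}) set)"
proof -
  have "(hom_polys d :: ((nat \<times> nat \<times> nat) \<Rightarrow> 'a) set) = PiE_dflt (deg_monos d) 0 (\<lambda>_. UNIV)"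
    by (auto simp: hom_polys_def PiE_dflt_def)
  then show ?thesis
    using finite_deg_monos by auto
qed

definition monomial_fun :: "nat \<times> nat \<times> nat \<Rightarrow> 'a::comm_semiring_1 \<times> 'a \<times> 'a \<Rightarrow> 'a" where
  "monomial_fun m v = (case m of (i, j, k) \<Rightarrow> case v of (x, y, z) \<Rightarrow> x ^ i * y ^ j * z ^ k)"

lemma poly_eval_monomial_fun: "poly_eval d f v = (\<Sum>m\<in>deg_monos d. f m * monomial_fun m v)"
  unfolding poly_eval_def monomial_fun_def
  by (cases v) (auto intro!: sum.cong simp: mult.assoc)

lemma poly_eval_diff: "poly_eval d (\<lambda>m. f m - g m) v = poly_eval d f v - poly_eval d g v"
  by (simp add: poly_eval_monomial_fun sum_subtractf algebra_simps)

lemma poly_eval_scale: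
  "poly_eval d f (c * x, c * y, c * z) = c ^ d * poly_eval d f (x, y, z)"
proof -
  have "monomial_fun m (c * x, c * y, c * z) = c ^ d * monomial_fun m (x, y, z)"
    if "m \<in> deg_monos d" for m
    using that by (auto simp: deg_monos_def monomial_fun_def power_mult_distrib power_add)
  then show ?thesis
    by (simp add: poly_eval_monomial_fun sum_distrib_left ac_simps cong: sum.cong)
qed

definition form_functions :: "nat \<Rightarrow> ('a::{field,finite} \<times> 'a \<times> 'a \<Rightarrow> 'a) set" where
  "form_functions d = poly_eval d ` hom_polys d"

lemma form_functions_lincomb:
  assumes "g \<in> form_functions d" "h \<in> form_functions d"
  shows "(\<lambda>v. a * g v + b * h v) \<in> form_functions d"
proof -
  obtain f1 f2 where f: "f1 \<in> hom_polys d" "f2 \<in> hom_polys d" "g = poly_eval d f1" "h = poly_eval d f2"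
    using assms by (auto simp: form_functions_def)
  have "(\<lambda>m. a * f1 m + b * f2 m) \<in> hom_polys d"
    using f by (simp add: hom_polys_iff)
  moreover have "(\<lambda>v. a * g v + b * h v) = poly_eval d (\<lambda>m. a * f1 m + b * f2 m)"
    by (simp add: f fun_eq_iff poly_eval_monomial_fun sum_distrib_left sum.distrib algebra_simps)
  ultimately show ?thesis
    by (simp add: form_functions_def)
qed

lemma zero_in_form_functions: "(\<lambda>_. 0) \<in> form_functions d"
proof -
  have "(\<lambda>_. 0) \<in> hom_polys d"
    by (simp add: hom_polys_iff)
  then show ?thesis
    by (force simp: form_functions_def poly_eval_monomial_fun)
qed

lemma form_functions_sum:
  assumes "finite S" "\<And>s. s \<in> S \<Longrightarrow> g s \<in> form_functions d"
  shows "(\<lambda>v. \<Sum>s\<in>S. c s * g s v) \<in> form_functions d"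
  using assms
proof (induction S rule: finite_induct)
  case empty
  then show ?case
    by (simp add: zero_in_form_functions)
next
  case (insert s S)
  then show ?case
    using form_functions_lincomb[of "g s" d "\<lambda>v. \<Sum>s\<in>S. c s * g s v" "c s" 1] by simp
qed

lemma monomial_fun_in_form_functions:
  assumes "m \<in> deg_monos d"
  shows "monomial_fun m \<in> form_functions d"
proof -
  let ?f = "\<lambda>m'. if m' = m then 1 else (0::'a)"
  have hom: "?f \<in> hom_polys d"
    using assms by (simp add: hom_polys_iff)
  have "poly_eval d ?f v = monomial_fun m v" for v
  proof -
    have "poly_eval d ?f v = (\<Sum>m'\<in>deg_monos d. if m' = m then monomial_fun m' v else 0)"
      by (auto simp: poly_eval_monomial_fun intro!: sum.cong)
    then show ?thesis
      using assms finite_deg_monos[of d] by simp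
  qed
  then have "monomial_fun m = poly_eval d ?f"
    by (simp add: fun_eq_iff)
  then show ?thesis
    unfolding form_functions_def using hom by (rule image_eqI)
qed

lemma monomial_fun_mult_in_form_functions:
  assumes "m \<in> deg_monos a" "m' \<in> deg_monos b"
  shows "(\<lambda>v. monomial_fun m v * monomial_fun m' v) \<in> form_functions (a + b)"
proof -
  obtain i j k i' j' k' where m: "m = (i, j, k)" "m' = (i', j', k')"
    by (cases m, cases m')
  have "(\<lambda>v. monomial_fun m v * monomial_fun m' v) = monomial_fun (i + i', j + j', k + k')"
    by (auto simp: fun_eq_iff m monomial_fun_def power_add mult_ac)
  also have "\<dots> \<in> form_functions (a + b)"
    using assms by (intro monomial_fun_in_form_functions) (simp add: m deg_monos_def)
  finally show ?thesis .
qed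

lemma form_functions_mult:
  assumes "g \<in> form_functions a" "h \<in> form_functions b"
  shows "(\<lambda>v. g v * h v) \<in> form_functions (a + b)"
proof -
  obtain f f' where f: "g = poly_eval a f" "h = poly_eval b f'"
    using assms by (auto simp: form_functions_def)
  have "(\<lambda>v. g v * h v) = (\<lambda>v. \<Sum>m\<in>deg_monos a. f m *
          (\<Sum>m'\<in>deg_monos b. f' m' * (monomial_fun m v * monomial_fun m' v)))"
    by (simp add: fun_eq_iff f poly_eval_monomial_fun sum_product sum_distrib_left mult_ac)
  also have "\<dots> \<in> form_functions (a + b)"
    by (intro form_functions_sum finite_deg_monos monomial_fun_mult_in_form_functions)
  finally show ?thesis .
qed

lemma form_functions_power:
  assumes "g \<in> form_functions a"
  shows "(\<lambda>v. g v ^ n) \<in> form_functions (a * n)"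
proof (induction n)
  case 0
  have "monomial_fun (0, 0, 0) \<in> (form_functions 0 :: ('a \<times> 'a \<times> 'a \<Rightarrow> 'a) set)"
    by (rule monomial_fun_in_form_functions) (simp add: deg_monos_def)
  moreover have "monomial_fun (0, 0, 0) = (\<lambda>_::'a \<times> 'a \<times> 'a. 1::'a)"
    by (simp add: fun_eq_iff monomial_fun_def)
  ultimately show ?case
    by simp
next
  case (Suc n)
  then show ?case
    using form_functions_mult[OF assms Suc.IH] by (simp add: add.commute)
qed

definition linear_form :: "'a \<Rightarrow> 'a \<Rightarrow> 'a \<Rightarrow> 'a::comm_semiring_1 \<times> 'a \<times> 'a \<Rightarrow> 'a" where
  "linear_form a b c v = (case v of (x, y, z) \<Rightarrow> a * x + b * y + c * z)"

lemma linear_form_in_form_functions: "linear_form a b c \<in> form_functions 1"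
proof -
  have "linear_form a b c = (\<lambda>v. a * monomial_fun (1, 0, 0) v
          + 1 * (b * monomial_fun (0, 1, 0) v + c * monomial_fun (0, 0, 1) v))"
    by (auto simp: fun_eq_iff linear_form_def monomial_fun_def)
  also have "\<dots> \<in> form_functions 1"
    by (intro form_functions_lincomb monomial_fun_in_form_functions) (auto simp: deg_monos_def)
  finally show ?thesis .
qed

section \<open>Points of the projective plane\<close>

definition normalized_points :: "('a::field \<times> 'a \<times> 'a) set" where
  "normalized_points = {(1, y, z) | y z. True} \<union> {(0, 1, z) | z. True} \<union> {(0, 0, 1)}"

lemma normalized_points_cases:
  assumes "r \<in> normalized_points"
  obtains y z where "r = (1, y, z)" | z where "r = (0, 1, z)" | "r = (0, 0, 1)"
  using assms unfolding normalized_points_def by blast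

lemma card_normalized_points:
  "card (normalized_points :: ('a::{field,finite} \<times> 'a \<times> 'a) set) = CARD('a)^2 + CARD('a) + 1"
proof -
  let ?A = "(\<lambda>(y, z). ((1::'a), y, z)) ` ((UNIV :: 'a set) \<times> (UNIV :: 'a set))"
  let ?B = "(\<lambda>z. ((0::'a), (1::'a), z)) ` (UNIV :: 'a set)"
  have "(normalized_points :: ('a \<times> 'a \<times> 'a) set) = ?A \<union> ?B \<union> {(0, 0, 1)}"
    unfolding normalized_points_def by auto
  moreover have "card ?A = CARD('a) * CARD('a)"
    by (subst card_image) (auto simp: inj_on_def card_cartesian_product)
  moreover have "card ?B = CARD('a)"
    by (subst card_image) (auto simp: inj_on_def)
  moreover have "card (?A \<union> ?B) = card ?A + card ?B"
    by (rule card_Un_disjoint) auto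
  moreover have "card (?A \<union> ?B \<union> {(0, 0, 1)}) = card (?A \<union> ?B) + 1"
    by (subst card_Un_disjoint) auto
  ultimately show ?thesis
    by (simp add: power2_eq_square)
qed

definition proj_class :: "'a::field \<times> 'a \<times> 'a \<Rightarrow> ('a \<times> 'a \<times> 'a) set" where
  "proj_class v = (case v of (x, y, z) \<Rightarrow> {(c * x, c * y, c * z) | c. c \<noteq> 0})"

lemma proj_class_scale:
  assumes "a \<noteq> 0"
  shows "proj_class (a * x, a * y, a * z) = proj_class (x, y, z)"
proof -
  have "(c * (a * x), c * (a * y), c * (a * z)) \<in> proj_class (x, y, z)" if "c \<noteq> 0" for c
    using that assms unfolding proj_class_def by (auto intro!: exI[of _ "c * a"])
  moreover have "(c * x, c * y, c * z) \<in> proj_class (a * x, a * y, a * z)" if "c \<noteq> 0" for c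
    using that assms unfolding proj_class_def by (auto intro!: exI[of _ "c / a"])
  ultimately show ?thesis
    unfolding proj_class_def by blast
qed

lemma proj_class_normalized:
  assumes "(x, y, z) \<noteq> ((0::'a::field), 0, 0)"
  obtains r where "r \<in> normalized_points" "proj_class (x, y, z) = proj_class r"
proof -
  consider "x \<noteq> 0" | "x = 0" "y \<noteq> 0" | "x = 0" "y = 0" "z \<noteq> 0"
    using assms by auto
  then show ?thesis
  proof cases
    case 1
    then have "proj_class (x, y, z) = proj_class (1, y / x, z / x)"
      using proj_class_scale[of x 1 "y / x" "z / x"] by simp
    then show ?thesis
      by (rule that[rotated]) (auto simp: normalized_points_def)
  next
    case 2
    then have "proj_class (x, y, z) = proj_class (0, 1, z / y)"
      using proj_class_scale[of y 0 1 "z / y"] by simp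
    then show ?thesis
      by (rule that[rotated]) (auto simp: normalized_points_def)
  next
    case 3
    then have "proj_class (x, y, z) = proj_class (0, 0, 1)"
      using proj_class_scale[of z 0 0 1] by simp
    then show ?thesis
      by (rule that[rotated]) (auto simp: normalized_points_def)
  qed
qed

lemma self_in_proj_class: "v \<in> proj_class v"
  by (cases v) (auto simp: proj_class_def intro!: exI[of _ 1])

lemma proj_class_eq_normalized_imp_eq:
  assumes "r \<in> normalized_points" "s \<in> normalized_points" "proj_class r = proj_class s"
  shows "r = s"
proof -
  obtain c where "s = (c * fst r, c * fst (snd r), c * snd (snd r))"
    using self_in_proj_class[of s] assms(3) by (cases r) (auto simp: proj_class_def)
  with assms(1,2) show ?thesis
    by (elim normalized_points_cases) auto
qed

lemma inj_on_proj_class: "inj_on proj_class normalized_points"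
  by (rule inj_onI) (rule proj_class_eq_normalized_imp_eq)

lemma proj_points_eq_image:
  "(proj_points :: ('a::{field,finite} \<times> 'a \<times> 'a) set set) = proj_class ` normalized_points"
proof -
  have "proj_points = proj_class ` {v :: 'a \<times> 'a \<times> 'a. v \<noteq> (0, 0, 0)}"
    by (auto simp: proj_points_def proj_class_def)
  also have "\<dots> = proj_class ` normalized_points"
  proof (intro equalityI subsetI)
    fix P :: "('a \<times> 'a \<times> 'a) set"
    assume "P \<in> proj_class ` {v. v \<noteq> (0, 0, 0)}"
    then obtain x y z where P: "P = proj_class (x, y, z)" and nz: "(x, y, z) \<noteq> (0, 0, 0)"
      by auto
    from nz obtain r where "r \<in> normalized_points" "proj_class (x, y, z) = proj_class r"
      by (rule proj_class_normalized)
    then show "P \<in> proj_class ` normalized_points"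
      by (simp add: P)
  next
    fix P :: "('a \<times> 'a \<times> 'a) set"
    assume "P \<in> proj_class ` normalized_points"
    moreover have "(0, 0, 0) \<notin> (normalized_points :: ('a \<times> 'a \<times> 'a) set)"
      by (simp add: normalized_points_def)
    ultimately show "P \<in> proj_class ` {v. v \<noteq> (0, 0, 0)}"
      by blast
  qed
  finally show ?thesis .
qed

lemma poly_eval_vanishes_on_proj_class:
  "(\<forall>u\<in>proj_class v. poly_eval d f u = 0) \<longleftrightarrow> poly_eval d f v = 0"
proof
  assume "\<forall>u\<in>proj_class v. poly_eval d f u = 0"
  then show "poly_eval d f v = 0"
    using self_in_proj_class by blast
next
  assume "poly_eval d f v = 0"
  then show "\<forall>u\<in>proj_class v. poly_eval d f u = 0"
    by (cases v) (auto simp: proj_class_def poly_eval_scale)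
qed

lemma num_points_eq_card_normalized:
  "num_points d f = card {r \<in> normalized_points. poly_eval d f r = 0}"
proof -
  have "{P \<in> proj_points. \<forall>u\<in>P. poly_eval d f u = 0}
      = proj_class ` {r \<in> normalized_points. poly_eval d f r = 0}"
    using poly_eval_vanishes_on_proj_class[of _ d f] by (auto simp: proj_points_eq_image)
  moreover have "inj_on proj_class {r \<in> normalized_points. poly_eval d f r = 0}"
    using inj_on_proj_class by (rule inj_on_subset) auto
  ultimately show ?thesis
    by (simp add: num_points_def card_image)
qed

section \<open>Forms vanishing at all but one point\<close>

definition select_form ::
    "nat \<Rightarrow> ('v \<Rightarrow> 'a::{field,finite}) \<Rightarrow> ('v \<Rightarrow> 'a) \<Rightarrow> ('v \<Rightarrow> 'a) \<Rightarrow> 'v \<Rightarrow> 'a" where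
  "select_form e L0 L1 L2 v = L0 v ^ e * (L0 v ^ (CARD('a) - 1) - L1 v ^ (CARD('a) - 1))
      * (L0 v ^ (CARD('a) - 1) - L2 v ^ (CARD('a) - 1))"

lemma select_form_in_form_functions:
  fixes L0 L1 L2 :: "'a \<times> 'a \<times> 'a \<Rightarrow> 'a::{field,finite}"
  assumes "L0 \<in> form_functions 1" "L1 \<in> form_functions 1" "L2 \<in> form_functions 1"
  shows "select_form e L0 L1 L2 \<in> form_functions (e + 2 * (CARD('a) - 1))"
proof -
  let ?p = "CARD('a) - 1"
  have pow: "(\<lambda>v. L v ^ n) \<in> form_functions n" if "L \<in> form_functions 1"
    for L :: "'a \<times> 'a \<times> 'a \<Rightarrow> 'a" and n
    using form_functions_power[OF that, of n] by simp
  have diff: "(\<lambda>v. L0 v ^ ?p - L v ^ ?p) \<in> form_functions ?p" if "L \<in> form_functions 1" for L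
    using form_functions_lincomb[OF pow[OF assms(1)] pow[OF that], where a = 1 and b = "-1"] by simp
  have "(\<lambda>v. L0 v ^ e * (L0 v ^ ?p - L1 v ^ ?p) * (L0 v ^ ?p - L2 v ^ ?p)) \<in> form_functions (e + ?p + ?p)"
    by (intro form_functions_mult diff pow assms)
  then show ?thesis
    unfolding select_form_def[abs_def] by (simp only: mult_2 add.assoc)
qed

lemma select_form_value:
  assumes "0 < e"
  shows "select_form e L0 L1 L2 v = (if L0 v \<noteq> 0 \<and> L1 v = 0 \<and> L2 v = 0 then L0 v ^ e else 0)"
  using assms finite_field_power_card_minus_one_if[of "L0 v"] finite_field_power_card_minus_one_if[of "L1 v"]
    finite_field_power_card_minus_one_if[of "L2 v"]
  by (auto simp: select_form_def)

definition point_form :: "nat \<Rightarrow> 'a::{field,finite} \<times> 'a \<times> 'a \<Rightarrow> 'a \<times> 'a \<times> 'a \<Rightarrow> 'a" where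
  "point_form e r = (case r of (a, b, c) \<Rightarrow>
     if a \<noteq> 0 then select_form e (linear_form 1 0 0) (linear_form (- b) 1 0) (linear_form (- c) 0 1)
     else if b \<noteq> 0 then select_form e (linear_form 0 1 0) (linear_form 1 0 0) (linear_form 0 (- c) 1)
     else select_form e (linear_form 0 0 1) (linear_form 1 0 0) (linear_form 0 1 0))"

lemma point_form_in_form_functions:
  "point_form e r \<in> form_functions (e + 2 * (CARD('a) - 1))"
  for r :: "'a::{field,finite} \<times> 'a \<times> 'a"
proof -
  have "select_form e (linear_form a b c) (linear_form a' b' c') (linear_form a'' b'' c'')
      \<in> (form_functions (e + 2 * (CARD('a) - 1)) :: ('a \<times> 'a \<times> 'a \<Rightarrow> 'a) set)"
    for a b c a' b' c' a'' b'' c'' :: 'a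
    by (intro select_form_in_form_functions linear_form_in_form_functions)
  then show ?thesis
    by (simp add: point_form_def split: prod.split)
qed

lemma point_form_value:
  assumes "0 < e" "r \<in> normalized_points" "s \<in> normalized_points"
  shows "point_form e r s = (if s = r then 1 else 0)"
  using assms(2,3)
  by (elim normalized_points_cases) (auto simp: point_form_def select_form_value linear_form_def assms(1))

section \<open>Equal fibres and binomial distributions\<close>

lemma card_fibre_eq_card_kernel:
  fixes \<phi> :: "('i \<Rightarrow> 'a::ab_group_add) \<Rightarrow> 'j \<Rightarrow> 'b::ab_group_add"
  assumes diff_closed: "\<And>f g. f \<in> H \<Longrightarrow> g \<in> H \<Longrightarrow> (\<lambda>i. f i - g i) \<in> H"
    and additive: "\<And>f g. f \<in> H \<Longrightarrow> g \<in> H \<Longrightarrow> \<phi> (\<lambda>i. f i - g i) = (\<lambda>j. \<phi> f j - \<phi> g j)"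
    and g: "g \<in> H"
  shows "card {f \<in> H. \<phi> f = \<phi> g} = card {f \<in> H. \<phi> f = (\<lambda>_. 0)}"
proof -
  have "(\<lambda>_. 0) \<in> H"
    using diff_closed[OF g g] by simp
  then have add_closed: "(\<lambda>i. k i + g i) \<in> H" if "k \<in> H" for k
    using diff_closed[OF that diff_closed[of "\<lambda>_. 0" g]] g by simp
  have "\<phi> (\<lambda>i. k i + g i) = \<phi> g" if "k \<in> H" "\<phi> k = (\<lambda>_. 0)" for k
    using additive[OF add_closed[OF that(1)] g] that by (simp add: fun_eq_iff)
  moreover have "\<phi> (\<lambda>i. f i - g i) = (\<lambda>_. 0)" if "f \<in> H" "\<phi> f = \<phi> g" for f
    using additive[OF that(1) g] that(2) by simp
  ultimately have "bij_betw (\<lambda>f i. f i - g i) {f \<in> H. \<phi> f = \<phi> g} {f \<in> H. \<phi> f = (\<lambda>_. 0)}"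
    by (intro bij_betwI[where g = "\<lambda>k i. k i + g i"]) (auto intro: diff_closed g add_closed)
  then show ?thesis
    by (rule bij_betw_same_card)
qed

lemma map_pmf_of_set_equal_fibres:
  assumes "finite A" "A \<noteq> {}" and fibres: "\<And>w. w \<in> \<phi> ` A \<Longrightarrow> card {a \<in> A. \<phi> a = w} = k"
  shows "map_pmf \<phi> (pmf_of_set A) = pmf_of_set (\<phi> ` A)"
proof (rule pmf_eqI)
  fix w
  have "(\<Sum>a\<in>A. card {w' \<in> \<phi> ` A. \<phi> a = w'}) = k * card (\<phi> ` A)"
    using assms by (intro sum_multicount) auto
  moreover have "{w' \<in> \<phi> ` A. \<phi> a = w'} = {\<phi> a}" if "a \<in> A" for a
    using that by auto
  ultimately have card_A: "card A = k * card (\<phi> ` A)"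
    by simp
  have "pmf (map_pmf \<phi> (pmf_of_set A)) w = real (card {a \<in> A. \<phi> a = w}) / real (card A)"
    using assms by (simp add: pmf_map measure_pmf_of_set vimage_def Int_def)
  also have "\<dots> = pmf (pmf_of_set (\<phi> ` A)) w"
    using assms fibres[of w] card_A by (auto simp: indicator_def)
  finally show "pmf (map_pmf \<phi> (pmf_of_set A)) w = pmf (pmf_of_set (\<phi> ` A)) w" .
qed

lemma map_pmf_eq_zero_uniform:
  "map_pmf (\<lambda>x. x = 0) (pmf_of_set (UNIV :: 'a::{zero,finite} set)) = bernoulli_pmf (1 / CARD('a))"
proof (rule pmf_eqI)
  fix b
  have "{x::'a. x \<noteq> 0} = UNIV - {0}"
    by auto
  then have "card {x::'a. x \<noteq> 0} = CARD('a) - 1"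
    by (simp add: card_Diff_singleton)
  moreover have "CARD('a) \<ge> 1"
    by (simp add: Suc_le_eq)
  ultimately show "pmf (map_pmf (\<lambda>x. x = 0) (pmf_of_set (UNIV :: 'a set))) b = pmf (bernoulli_pmf (1 / CARD('a))) b"
    by (cases b) (auto simp: pmf_map measure_pmf_of_set vimage_def Compl_eq_Diff_UNIV field_simps)
qed

lemma map_pmf_zero_count_uniform:
  assumes "finite I"
  shows "map_pmf (\<lambda>w. card {i \<in> I. w i = 0}) (pmf_of_set (PiE_dflt I 0 (\<lambda>_. UNIV :: 'a::{zero,finite} set)))
       = binomial_pmf (card I) (1 / CARD('a))"
proof -
  have "map_pmf (\<lambda>w. card {i \<in> I. w i = 0}) (pmf_of_set (PiE_dflt I 0 (\<lambda>_. UNIV :: 'a set)))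
      = map_pmf (\<lambda>b. card {i \<in> I. b i}) (map_pmf ((\<circ>) (\<lambda>x::'a. x = 0)) (Pi_pmf I 0 (\<lambda>_. pmf_of_set UNIV)))"
    using assms by (simp add: Pi_pmf_of_set pmf.map_comp comp_def)
  also have "\<dots> = map_pmf (\<lambda>b. card {i \<in> I. b i}) (Pi_pmf I True (\<lambda>_. bernoulli_pmf (1 / CARD('a))))"
    using assms by (simp add: Pi_pmf_map[symmetric] map_pmf_eq_zero_uniform)
  also have "\<dots> = binomial_pmf (card I) (1 / CARD('a))"
    using assms by (intro binomial_pmf_altdef'[symmetric]) auto
  finally show ?thesis .
qed

lemma prob_count_bernoulli:
  assumes "finite A" "p \<in> {0..1}"
  shows "measure_pmf.prob (Pi_pmf A False (\<lambda>_. bernoulli_pmf p)) {B. (\<Sum>i\<in>A. (of_bool (B i) :: int)) = n}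
       = measure_pmf.prob (binomial_pmf (card A) p) {m. int m = n}"
proof -
  have "(\<Sum>i\<in>A. (of_bool (B i) :: int)) = int (card {i \<in> A. B i})" for B
    using assms(1) by (simp add: Int_def conj_commute)
  then show ?thesis
    using assms by (simp add: binomial_pmf_altdef'[where dflt = False and A = A] vimage_def)
qed

definition point_values :: "nat \<Rightarrow> ((nat \<times> nat \<times> nat) \<Rightarrow> 'a::{field,finite}) \<Rightarrow> 'a \<times> 'a \<times> 'a \<Rightarrow> 'a" where
  "point_values d f r = (if r \<in> normalized_points then poly_eval d f r else 0)"

lemma point_values_surj:
  assumes "d \<ge> 2 * CARD('a::{field,finite}) - 1"
  shows "point_values d ` hom_polys d = PiE_dflt normalized_points 0 (\<lambda>_. UNIV :: 'a set)"
proof (intro equalityI subsetI)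
  fix w :: "'a \<times> 'a \<times> 'a \<Rightarrow> 'a"
  assume w: "w \<in> PiE_dflt normalized_points 0 (\<lambda>_. UNIV)"
  define e where "e = d - 2 * (CARD('a) - 1)"
  have e: "0 < e" "e + 2 * (CARD('a) - 1) = d"
    using assms card_field_ge_two[where 'a = 'a] by (auto simp: e_def)
  have "point_form e r \<in> form_functions d" for r :: "'a \<times> 'a \<times> 'a"
    using point_form_in_form_functions[of e r] by (simp only: e(2))
  then have "(\<lambda>v. \<Sum>r\<in>normalized_points. w r * point_form e r v) \<in> form_functions d"
    by (intro form_functions_sum) simp_all
  then obtain f where f: "f \<in> hom_polys d" "poly_eval d f = (\<lambda>v. \<Sum>r\<in>normalized_points. w r * point_form e r v)"
    by (auto simp: form_functions_def)
  have "point_values d f s = w s" for s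
  proof (cases "s \<in> normalized_points")
    case True
    then have "poly_eval d f s = (\<Sum>r\<in>normalized_points. if r = s then w r else 0)"
      unfolding f(2) by (intro sum.cong) (auto simp: point_form_value e)
    then show ?thesis
      using True by (simp add: point_values_def)
  next
    case False
    moreover from w False have "w s = 0"
      unfolding PiE_dflt_def by blast
    ultimately show ?thesis
      by (simp add: point_values_def)
  qed
  then have "w = point_values d f"
    by (simp add: fun_eq_iff)
  with f(1) show "w \<in> point_values d ` hom_polys d"
    by blast
qed (auto simp: point_values_def PiE_dflt_def)

lemma map_pmf_point_values:
  assumes "d \<ge> 2 * CARD('a::{field,finite}) - 1"
  shows "map_pmf (point_values d) (pmf_of_set (hom_polys d))
       = pmf_of_set (PiE_dflt normalized_points 0 (\<lambda>_. UNIV :: 'a set))"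
proof -
  have "(\<lambda>_. 0) \<in> (hom_polys d :: ((nat \<times> nat \<times> nat) \<Rightarrow> 'a) set)"
    by (simp add: hom_polys_iff)
  moreover have "card {f \<in> hom_polys d. point_values d f = point_values d g}
      = card {f \<in> (hom_polys d :: ((nat \<times> nat \<times> nat) \<Rightarrow> 'a) set). point_values d f = (\<lambda>_. 0)}"
    if "g \<in> hom_polys d" for g :: "(nat \<times> nat \<times> nat) \<Rightarrow> 'a"
    by (rule card_fibre_eq_card_kernel[OF _ _ that])
      (auto simp: hom_polys_iff point_values_def poly_eval_diff fun_eq_iff)
  ultimately have "map_pmf (point_values d) (pmf_of_set (hom_polys d))
      = pmf_of_set (point_values d ` (hom_polys d :: ((nat \<times> nat \<times> nat) \<Rightarrow> 'a) set))"
    by (intro map_pmf_of_set_equal_fibres finite_hom_polys) auto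
  then show ?thesis
    by (simp add: point_values_surj[OF assms])
qed

theorem proposition3p3:
  fixes d :: nat and n :: int
  assumes "d \<ge> 2 * CARD('a::{field,finite}) - 1"
  shows "real (card {f \<in> (hom_polys d :: ((nat \<times> nat \<times> nat) \<Rightarrow> 'a) set). int (num_points d f) = n})
           / real (card (hom_polys d :: ((nat \<times> nat \<times> nat) \<Rightarrow> 'a) set))
         = measure_pmf.prob
             (Pi_pmf {1..CARD('a)^2 + CARD('a) + 1} False
                (\<lambda>_. bernoulli_pmf (1 / real CARD('a))))
             {B. (\<Sum>i\<in>{1..CARD('a)^2 + CARD('a) + 1}. (of_bool (B i) :: int)) = n}"
proof -
  let ?H = "hom_polys d :: ((nat \<times> nat \<times> nat) \<Rightarrow> 'a) set"
  let ?N = "CARD('a)^2 + CARD('a) + 1"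
  let ?zeros = "\<lambda>w :: 'a \<times> 'a \<times> 'a \<Rightarrow> 'a. card {r \<in> normalized_points. w r = 0}"
  have zeros: "num_points d f = ?zeros (point_values d f)" for f :: "_ \<Rightarrow> 'a"
    unfolding num_points_eq_card_normalized point_values_def by (rule arg_cong[where f = card]) auto
  have "?H \<noteq> {}" "finite ?H"
    by (auto simp: hom_polys_iff finite_hom_polys)
  then have "real (card {f \<in> ?H. int (num_points d f) = n}) / real (card ?H)
      = measure_pmf.prob (pmf_of_set ?H) {f. int (num_points d f) = n}"
    by (simp add: measure_pmf_of_set Int_def)
  also have "\<dots> = measure_pmf.prob (map_pmf ?zeros (map_pmf (point_values d) (pmf_of_set ?H))) {m. int m = n}"
    by (simp add: zeros vimage_def)
  also have "\<dots> = measure_pmf.prob (binomial_pmf ?N (1 / CARD('a))) {m. int m = n}"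
    by (simp add: map_pmf_point_values[OF assms] map_pmf_zero_count_uniform card_normalized_points)
  also have "\<dots> = measure_pmf.prob (Pi_pmf {1..?N} False (\<lambda>_. bernoulli_pmf (1 / real CARD('a))))
             {B. (\<Sum>i\<in>{1..?N}. (of_bool (B i) :: int)) = n}"
    using prob_count_bernoulli[of "{1..?N}" "1 / CARD('a)" n] card_field_ge_two[where 'a = 'a] by simp
  finally show ?thesis .
qed

end
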